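(* Let $\alpha_1,\dots,\alpha_n,\beta,\gamma>0$, let $G_{\alpha_1},\dots,G_{\alpha_n}$ be independent gamma random variables with $G_{\alpha_i}$ having density $x^{\alpha_i-1}e^{-x}/\Gamma(\alpha_i)$, and let $H_{\beta,\gamma}=G_\beta/G_\gamma$ be a second kind beta random variable (with $G_\beta,G_\gamma$ independent gamma variables of shapes $\beta,\gamma$ and unit scale), independent of the $G_{\alpha_i}$. Define $(X_1,\dots,X_n)=(G_{\alpha_1}H_{\beta,\gamma},\dots,G_{\alpha_n}H_{\beta,\gamma})$ and $\tilde\alpha=\sum_{j=1}^n\alpha_j$. Then $S_n=X_1+\dots+X_n$ has the same distribution as $G_{\tilde\alpha}H_{\beta,\gamma}$ (with $G_{\tilde\alpha}$ gamma of shape $\tilde\alpha$ independent of $H_{\beta,\gamma}$), and its pdf is $$f_{S_n}(x)=\frac{\Gamma(\tilde\alpha+\gamma)\Gamma(\beta+\gamma)}{\Gamma(\tilde\alpha)\Gamma(\beta)\Gamma(\gamma)}\,x^{\tilde\alpha-1}\,U(\tilde\alpha+\gamma,\tilde\alpha-\beta+1,x),\qquad x>0,$$ and $f_{S_n}(x)=0$ for $x<0$.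
   Context: $U(a,b,z)$ is the confluent hypergeometric (Kummer) function of the second kind, $U(a,b,z)=\frac{1}{\Gamma(a)}\int_0^\infty e^{-zt}t^{a-1}(1+t)^{b-a-1}\,dt$ for $a,z>0$. *)

theory Defs
  imports "HOL-Probability.Probability"
begin

definition gamma_density :: "real \<Rightarrow> real \<Rightarrow> real" where
  "gamma_density a x = (if 0 < x then x powr (a - 1) * exp (- x) / Gamma a else 0)"

text \<open>Kummer (confluent hypergeometric) function of the second kind, integral representation
  valid for a > 0, z > 0.\<close>
definition kummerU :: "real \<Rightarrow> real \<Rightarrow> real \<Rightarrow> real" where
  "kummerU a b z = (1 / Gamma a) *
     (LBINT t:{0<..}. exp (- z * t) * t powr (a - 1) * (1 + t) powr (b - a - 1))"

end

theory Submission
  imports Defs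
begin

text \<open>Independent gamma variables add their shapes (the convolution of two gamma densities
  reduces to a Beta integral), so \<open>S\<close> is a product \<open>Y B / C\<close> of independent gamma variables of
  shapes \<open>a = \<alpha>t\<close>, \<open>\<beta>\<close>, \<open>\<gamma>\<close>. Its density is obtained by integrating the joint density of
  \<open>(Y B / C, B, C)\<close> over \<open>b\<close> and \<open>c\<close>: substituting \<open>c = b t\<close> makes the integrand factor, and the
  \<open>b\<close>-integral is a gamma integral with rate \<open>1 + t\<close>. What remains is the integral of
  \<open>exp (- x t) t powr (a + \<gamma> - 1) (1 + t) powr (- \<beta> - \<gamma>)\<close> over \<open>t > 0\<close>, which is the integral
  representation of \<open>Gamma (a + \<gamma>) U(a + \<gamma>, a - \<beta> + 1, x)\<close>.\<close>

lemma nn_integral_powr_exp_scaled: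
  fixes s c :: real
  assumes s: "0 < s" and c: "0 < c"
  shows "(\<integral>\<^sup>+b. ennreal (b powr (s-1) * exp (-(c*b))) * indicator {0<..} b \<partial>lborel)
         = ennreal (Gamma s / c powr s)"
    (is "?I = _")
proof -
  have pointwise: "ennreal ((c*b) powr (s-1) / exp (c*b)) * indicator {0..} (c*b)
      = ennreal (c powr (s-1)) * (ennreal (b powr (s-1) * exp (-(c*b))) * indicator {0<..} b)" for b
  proof (cases "0 < b")
    case True
    then have "(c*b) powr (s-1) / exp (c*b) = c powr (s-1) * (b powr (s-1) * exp (-(c*b)))"
      using c by (simp add: powr_mult exp_minus field_simps)
    then show ?thesis using True c by (simp add: ennreal_mult)
  qed (use c in \<open>auto simp: indicator_def zero_le_mult_iff\<close>)
  have "ennreal (Gamma s) = (\<integral>\<^sup>+t. ennreal (t powr (s-1) / exp t) * indicator {0..} t \<partial>lborel)"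
    by (rule nn_integral_has_integral_lebesgue'[OF _ Gamma_integral_real[OF s], symmetric]) auto
  also have "\<dots> = ennreal c * (\<integral>\<^sup>+b. ennreal ((c*b) powr (s-1) / exp (c*b)) * indicator {0..} (c*b) \<partial>lborel)"
    using nn_integral_real_affine[of "\<lambda>t. ennreal (t powr (s-1) / exp t) * indicator {0..} t" c 0] c
    by simp
  also have "\<dots> = ennreal c * ennreal (c powr (s-1)) * ?I"
    by (simp add: pointwise nn_integral_cmult mult.assoc)
  also have "\<dots> = ennreal (c powr s) * ?I"
    using c by (simp add: ennreal_mult[symmetric] powr_diff)
  finally have "ennreal (Gamma s) = ennreal (c powr s) * ?I" .
  then have "?I = ennreal (Gamma s) / ennreal (c powr s)"
    using c by (simp add: mult.commute[of "ennreal (c powr s)"] mult_divide_eq_ennreal)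
  then show ?thesis
    using c s by (simp add: divide_ennreal Gamma_real_pos less_imp_le)
qed

lemma nn_integral_Beta:
  fixes a b :: real
  assumes "0 < a" "0 < b"
  shows "(\<integral>\<^sup>+t. ennreal (t powr (a-1) * (1-t) powr (b-1)) * indicator {0<..<1} t \<partial>lborel)
         = ennreal (Beta a b)"
proof -
  have "(\<integral>\<^sup>+t. ennreal (t powr (a-1) * (1-t) powr (b-1)) * indicator {0..1} t \<partial>lborel) = ennreal (Beta a b)"
    by (rule nn_integral_has_integral_lebesgue'[OF _ has_integral_Beta_real[OF assms]]) auto
  also have "(\<lambda>t. ennreal (t powr (a-1) * (1-t) powr (b-1)) * indicator {0..1} t)
     = (\<lambda>t::real. ennreal (t powr (a-1) * (1-t) powr (b-1)) * indicator {0<..<1} t)"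
    by (auto simp: indicator_def fun_eq_iff)
  finally show ?thesis .
qed

lemma nn_integral_Beta_scaled:
  fixes a b x :: real
  assumes a: "0 < a" and b: "0 < b" and x: "0 < x"
  shows "(\<integral>\<^sup>+y. ennreal ((x-y) powr (a-1) * y powr (b-1)) * indicator {0<..<x} y \<partial>lborel)
         = ennreal (x powr (a+b-1) * Beta b a)"
proof -
  have pointwise: "ennreal ((x - x*t) powr (a-1) * (x*t) powr (b-1)) * indicator {0<..<x} (x*t)
     = ennreal (x powr (a+b-2)) * (ennreal (t powr (b-1) * (1-t) powr (a-1)) * indicator {0<..<1} t)" for t
  proof (cases "0 < t \<and> t < 1")
    case True
    have "x - x*t = x * (1-t)" by (simp add: algebra_simps)
    then have "(x - x*t) powr (a-1) * (x*t) powr (b-1)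
        = (x powr (a-1) * x powr (b-1)) * (t powr (b-1) * (1-t) powr (a-1))"
      using True x by (simp add: powr_mult)
    also have "x powr (a-1) * x powr (b-1) = x powr (a+b-2)"
      by (simp add: powr_add[symmetric])
    finally show ?thesis using True x by (simp add: ennreal_mult[symmetric])
  next
    case False
    then have "\<not> (0 < x*t \<and> x*t < x)" using x by (auto simp: zero_less_mult_iff)
    then show ?thesis using False by (auto simp: indicator_def)
  qed
  have "(\<integral>\<^sup>+y. ennreal ((x-y) powr (a-1) * y powr (b-1)) * indicator {0<..<x} y \<partial>lborel)
      = ennreal x * (\<integral>\<^sup>+t. ennreal ((x - x*t) powr (a-1) * (x*t) powr (b-1)) * indicator {0<..<x} (x*t) \<partial>lborel)"
    using nn_integral_real_affine[of "\<lambda>y. ennreal ((x-y) powr (a-1) * y powr (b-1)) * indicator {0<..<x} y" x 0] x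
    by simp
  also have "\<dots> = ennreal x * ennreal (x powr (a+b-2)) * ennreal (Beta b a)"
    by (simp add: pointwise nn_integral_cmult nn_integral_Beta[OF b a] mult.assoc)
  also have "\<dots> = ennreal (x powr (a+b-1) * Beta b a)"
    using x a b powr_add[of x 1 "a+b-2"]
    by (simp add: ennreal_mult[symmetric] Beta_def less_imp_le)
  finally show ?thesis .
qed

lemma gamma_density_nonneg: "0 < a \<Longrightarrow> 0 \<le> gamma_density a x"
  by (simp add: gamma_density_def)

lemma borel_measurable_gamma_density[measurable]: "gamma_density a \<in> borel_measurable borel"
  unfolding gamma_density_def by measurable

lemma gamma_density_convolution:
  fixes a b :: real
  assumes a: "0 < a" and b: "0 < b"
  shows "(\<lambda>x. \<integral>\<^sup>+y. ennreal (gamma_density a (x-y)) * ennreal (gamma_density b y) \<partial>lborel)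
       = (\<lambda>x. ennreal (gamma_density (a+b) x))"
proof
  fix x :: real
  show "(\<integral>\<^sup>+y. ennreal (gamma_density a (x-y)) * ennreal (gamma_density b y) \<partial>lborel)
       = ennreal (gamma_density (a+b) x)"
  proof (cases "0 < x")
    case False
    then have "ennreal (gamma_density a (x-y)) * ennreal (gamma_density b y) = 0" for y
      by (auto simp: gamma_density_def)
    then show ?thesis using False by (simp add: gamma_density_def del: mult_eq_0_iff)
  next
    case x: True
    define K where "K = exp (-x) / (Gamma a * Gamma b)"
    have K: "0 \<le> K" using a b by (simp add: K_def)
    have pointwise: "ennreal (gamma_density a (x-y)) * ennreal (gamma_density b y)
       = ennreal K * (ennreal ((x-y) powr (a-1) * y powr (b-1)) * indicator {0<..<x} y)" for y
    proof (cases "0 < y \<and> y < x")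
      case True
      have "gamma_density a (x-y) * gamma_density b y = K * ((x-y) powr (a-1) * y powr (b-1))"
        using True by (simp add: gamma_density_def K_def exp_diff exp_minus field_simps)
      then show ?thesis using True K a b
        by (simp add: ennreal_mult[symmetric] gamma_density_nonneg)
    qed (auto simp: gamma_density_def indicator_def not_less)
    have "(\<integral>\<^sup>+y. ennreal (gamma_density a (x-y)) * ennreal (gamma_density b y) \<partial>lborel)
       = ennreal K * ennreal (x powr (a+b-1) * Beta b a)"
      by (simp add: pointwise nn_integral_cmult nn_integral_Beta_scaled[OF a b x])
    also have "\<dots> = ennreal (K * (x powr (a+b-1) * Beta b a))"
      by (rule ennreal_mult'[OF K, symmetric])
    also have "K * (x powr (a+b-1) * Beta b a) = gamma_density (a+b) x"
      using x Gamma_real_pos[OF a] Gamma_real_pos[OF b]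
      by (simp add: gamma_density_def K_def Beta_def add.commute)
    finally show ?thesis .
  qed
qed

lemma (in prob_space) distributed_gamma_sum:
  fixes X :: "'i \<Rightarrow> 'a \<Rightarrow> real"
  assumes "finite I" "I \<noteq> {}"
    and "\<And>i. i \<in> I \<Longrightarrow> 0 < \<alpha> i"
    and "\<And>i. i \<in> I \<Longrightarrow> distributed M lborel (X i) (\<lambda>x. ennreal (gamma_density (\<alpha> i) x))"
    and "indep_vars (\<lambda>i. borel) X I"
  shows "distributed M lborel (\<lambda>x. \<Sum>i\<in>I. X i x) (\<lambda>x. ennreal (gamma_density (\<Sum>i\<in>I. \<alpha> i) x))"
  using assms
proof (induct rule: finite_ne_induct)
  case (singleton i) then show ?case by auto
next
  case (insert i I)
  have "0 < \<alpha> i" "0 < (\<Sum>j\<in>I. \<alpha> j)" using insert by (auto intro!: sum_pos)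
  moreover have "distributed M lborel (\<lambda>x. X i x + (\<Sum>j\<in>I. X j x))
      (\<lambda>x. \<integral>\<^sup>+y. ennreal (gamma_density (\<alpha> i) (x - y)) * ennreal (gamma_density (\<Sum>j\<in>I. \<alpha> j) y) \<partial>lborel)"
    using insert by (intro distributed_convolution indep_vars_sum) (auto intro!: indep_vars_subset)
  ultimately show ?case
    using insert by (simp add: gamma_density_convolution)
qed

text \<open>The restriction \<open>b \<le> a + 1\<close> lets the gamma kernel dominate the integrand.\<close>

lemma nn_integral_kummerU:
  fixes a b z :: real
  assumes a: "0 < a" and z: "0 < z" and b: "b \<le> a + 1"
  shows "(\<integral>\<^sup>+t. ennreal (exp (- z * t) * t powr (a-1) * (1+t) powr (b-a-1)) * indicator {0<..} t \<partial>lborel)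
       = ennreal (Gamma a * kummerU a b z)"
proof -
  define f where "f t = indicator {0<..} t * (exp (- z * t) * t powr (a-1) * (1+t) powr (b-a-1))" for t :: real
  have f_le: "ennreal (f t) \<le> ennreal (t powr (a-1) * exp (-(z*t))) * indicator {0<..} t" for t
  proof (cases "0 < t")
    case True
    have "(1+t) powr (b-a-1) \<le> 1"
      using True b powr_less_one[of "1+t" "b-a-1"] by (cases "b = a+1") auto
    then show ?thesis
      using True by (simp add: f_def mult.commute mult_left_le)
  qed (simp add: f_def)
  have "(\<integral>\<^sup>+t. ennreal (f t) \<partial>lborel)
      \<le> (\<integral>\<^sup>+t. ennreal (t powr (a-1) * exp (-(z*t))) * indicator {0<..} t \<partial>lborel)"
    by (intro nn_integral_mono f_le)
  also have "\<dots> = ennreal (Gamma a / z powr a)"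
    by (rule nn_integral_powr_exp_scaled[OF a z])
  finally have "integrable lborel f"
    unfolding f_def by (intro integrableI_nonneg) (auto simp: less_top[symmetric] top_unique)
  then have "(\<integral>\<^sup>+t. ennreal (f t) \<partial>lborel) = ennreal (LBINT t:{0<..}. exp (- z * t) * t powr (a-1) * (1+t) powr (b-a-1))"
    by (subst nn_integral_eq_integral) (auto simp: f_def[abs_def] set_lebesgue_integral_def)
  moreover have "(\<lambda>t. ennreal (exp (- z * t) * t powr (a-1) * (1+t) powr (b-a-1)) * indicator {0<..} t)
      = (\<lambda>t. ennreal (f t))"
    by (auto simp: f_def indicator_def fun_eq_iff)
  ultimately show ?thesis
    using Gamma_real_pos[OF a] by (simp add: kummerU_def)
qed

text \<open>Joint density of \<open>(Y B / C, B, C)\<close> for independent gamma variables \<open>Y, B, C\<close>;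
  \<open>c / b\<close> is the Jacobian of \<open>x \<mapsto> x c / b\<close>.\<close>

definition gamma_ratio_joint_density :: "real \<Rightarrow> real \<Rightarrow> real \<Rightarrow> real \<Rightarrow> real \<Rightarrow> real \<Rightarrow> real" where
  "gamma_ratio_joint_density a \<beta> \<gamma> x b c =
     c / b * gamma_density a (c * x / b) * gamma_density \<beta> b * gamma_density \<gamma> c"

text \<open>Beta prime is the second kind beta distribution, that of \<open>G\<^sub>\<beta> / G\<^sub>\<gamma>\<close>.\<close>

definition gamma_times_beta_prime_density :: "real \<Rightarrow> real \<Rightarrow> real \<Rightarrow> real \<Rightarrow> real" where
  "gamma_times_beta_prime_density a \<beta> \<gamma> x = (if 0 < x then
      Gamma (a + \<gamma>) * Gamma (\<beta> + \<gamma>) / (Gamma a * Gamma \<beta> * Gamma \<gamma>)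
      * x powr (a - 1) * kummerU (a + \<gamma>) (a - \<beta> + 1) x else 0)"

lemma gamma_ratio_joint_density_scaled:
  fixes a \<beta> \<gamma> x b t :: real
  assumes x: "0 < x" and b: "0 < b" and t: "0 < t"
  shows "b * gamma_ratio_joint_density a \<beta> \<gamma> x b (b*t)
       = x powr (a-1) / (Gamma a * Gamma \<beta> * Gamma \<gamma>) * (t powr (a+\<gamma>-1) * exp (-(x*t)))
         * (b powr (\<beta>+\<gamma>-1) * exp (-((1+t)*b)))"
proof -
  have "u powr (p+q-1) = u * u powr (p-1) * u powr (q-1)" if "0 < u" for u p q :: real
    using that powr_add[of u 1 "p-1"] powr_add[of u p "q-1"] by (simp add: add_diff_eq)
  moreover have "exp (-((1+t)*b)) = exp (-b) * exp (-(b*t))"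
    by (simp add: exp_add[symmetric] algebra_simps)
  ultimately show ?thesis
    using x b t by (simp add: gamma_ratio_joint_density_def gamma_density_def powr_mult field_simps)
qed

lemma nn_integral_gamma_ratio_joint_density_substitution:
  fixes a \<beta> \<gamma> x b :: real
  assumes x: "0 < x"
  shows "(\<integral>\<^sup>+c. ennreal (gamma_ratio_joint_density a \<beta> \<gamma> x b c) \<partial>lborel)
       = (\<integral>\<^sup>+t. ennreal (x powr (a-1) / (Gamma a * Gamma \<beta> * Gamma \<gamma>) * (t powr (a+\<gamma>-1) * exp (-(x*t)))
              * (b powr (\<beta>+\<gamma>-1) * exp (-((1+t)*b)))) * indicator {0<..} t * indicator {0<..} b \<partial>lborel)"
proof (cases "0 < b")
  case b: True
  have "(\<integral>\<^sup>+c. ennreal (gamma_ratio_joint_density a \<beta> \<gamma> x b c) \<partial>lborel)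
      = (\<integral>\<^sup>+t. ennreal b * ennreal (gamma_ratio_joint_density a \<beta> \<gamma> x b (b*t)) \<partial>lborel)"
    using nn_integral_real_affine[of "\<lambda>c. ennreal (gamma_ratio_joint_density a \<beta> \<gamma> x b c)" b 0] b
    by (simp add: nn_integral_cmult gamma_ratio_joint_density_def)
  also have "\<dots> = (\<integral>\<^sup>+t. ennreal (x powr (a-1) / (Gamma a * Gamma \<beta> * Gamma \<gamma>) * (t powr (a+\<gamma>-1) * exp (-(x*t)))
              * (b powr (\<beta>+\<gamma>-1) * exp (-((1+t)*b)))) * indicator {0<..} t * indicator {0<..} b \<partial>lborel)"
  proof (intro nn_integral_cong)
    fix t :: real
    show "ennreal b * ennreal (gamma_ratio_joint_density a \<beta> \<gamma> x b (b*t))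
        = ennreal (x powr (a-1) / (Gamma a * Gamma \<beta> * Gamma \<gamma>) * (t powr (a+\<gamma>-1) * exp (-(x*t)))
              * (b powr (\<beta>+\<gamma>-1) * exp (-((1+t)*b)))) * indicator {0<..} t * indicator {0<..} b"
      using b gamma_ratio_joint_density_scaled[OF x b, of t a \<beta> \<gamma>]
      by (cases "0 < t")
         (auto simp: ennreal_mult'[symmetric] gamma_ratio_joint_density_def gamma_density_def
           zero_less_mult_iff)
  qed
  finally show ?thesis .
qed (simp add: gamma_ratio_joint_density_def gamma_density_def)

lemma nn_integral_gamma_ratio_joint_density:
  fixes a \<beta> \<gamma> x :: real
  assumes a: "0 < a" and \<beta>: "0 < \<beta>" and \<gamma>: "0 < \<gamma>"
  shows "(\<integral>\<^sup>+b. \<integral>\<^sup>+c. ennreal (gamma_ratio_joint_density a \<beta> \<gamma> x b c) \<partial>lborel \<partial>lborel)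
       = ennreal (gamma_times_beta_prime_density a \<beta> \<gamma> x)"
proof (cases "0 < x")
  case False
  then have "gamma_ratio_joint_density a \<beta> \<gamma> x b c = 0" for b c
    by (cases "0 < b \<and> 0 < c")
       (auto simp: gamma_ratio_joint_density_def gamma_density_def zero_less_mult_iff zero_less_divide_iff)
  then show ?thesis using False by (simp add: gamma_times_beta_prime_density_def)
next
  case x: True
  define K where "K = x powr (a-1) / (Gamma a * Gamma \<beta> * Gamma \<gamma>)"
  define P where "P t = t powr (a+\<gamma>-1) * exp (-(x*t))" for t :: real
  define Q where "Q t b = b powr (\<beta>+\<gamma>-1) * exp (-((1+t)*b))" for t b :: real
  have K: "0 \<le> K" using a \<beta> \<gamma> by (simp add: K_def)
  have substitution: "(\<integral>\<^sup>+c. ennreal (gamma_ratio_joint_density a \<beta> \<gamma> x b c) \<partial>lborel)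
      = (\<integral>\<^sup>+t. ennreal (K * P t * Q t b) * indicator {0<..} t * indicator {0<..} b \<partial>lborel)" for b
    unfolding K_def P_def Q_def by (rule nn_integral_gamma_ratio_joint_density_substitution[OF x])
  have b_integral: "(\<integral>\<^sup>+b. ennreal (K * P t * Q t b) * indicator {0<..} t * indicator {0<..} b \<partial>lborel)
      = ennreal (K * Gamma (\<beta>+\<gamma>))
        * (ennreal (exp (- x * t) * t powr (a+\<gamma>-1) * (1+t) powr ((a-\<beta>+1)-(a+\<gamma>)-1)) * indicator {0<..} t)"
    for t
  proof (cases "0 < t")
    case t: True
    have "(\<integral>\<^sup>+b. ennreal (K * P t * Q t b) * indicator {0<..} t * indicator {0<..} b \<partial>lborel)
        = ennreal (K * P t) * (\<integral>\<^sup>+b. ennreal (Q t b) * indicator {0<..} b \<partial>lborel)"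
      using t K by (simp add: P_def Q_def ennreal_mult' nn_integral_cmult mult.assoc)
    also have "\<dots> = ennreal (K * P t) * ennreal (Gamma (\<beta>+\<gamma>) / (1+t) powr (\<beta>+\<gamma>))"
      using nn_integral_powr_exp_scaled[of "\<beta>+\<gamma>" "1+t"] \<beta> \<gamma> t by (simp add: Q_def)
    also have "\<dots> = ennreal (K * Gamma (\<beta>+\<gamma>) * (exp (- x * t) * t powr (a+\<gamma>-1) * (1+t) powr ((a-\<beta>+1)-(a+\<gamma>)-1)))"
      using t K \<beta> \<gamma> powr_minus_divide[of "1+t" "\<beta>+\<gamma>"]
      by (simp add: ennreal_mult[symmetric] P_def algebra_simps)
    finally show ?thesis
      using t K \<beta> \<gamma> by (simp add: ennreal_mult')
  qed simp
  have "(\<integral>\<^sup>+b. \<integral>\<^sup>+c. ennreal (gamma_ratio_joint_density a \<beta> \<gamma> x b c) \<partial>lborel \<partial>lborel)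
      = (\<integral>\<^sup>+t. \<integral>\<^sup>+b. ennreal (K * P t * Q t b) * indicator {0<..} t * indicator {0<..} b \<partial>lborel \<partial>lborel)"
    unfolding substitution
    by (rule lborel_pair.Fubini'[symmetric]) (simp add: P_def Q_def)
  also have "\<dots> = ennreal (K * Gamma (\<beta>+\<gamma>)) * ennreal (Gamma (a+\<gamma>) * kummerU (a+\<gamma>) (a-\<beta>+1) x)"
    using nn_integral_kummerU[of "a+\<gamma>" x "a-\<beta>+1"] a \<beta> \<gamma> x
    by (simp add: b_integral nn_integral_cmult)
  also have "\<dots> = ennreal (K * Gamma (\<beta>+\<gamma>) * (Gamma (a+\<gamma>) * kummerU (a+\<gamma>) (a-\<beta>+1) x))"
    using K \<beta> \<gamma> by (simp add: ennreal_mult')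
  also have "\<dots> = ennreal (gamma_times_beta_prime_density a \<beta> \<gamma> x)"
    using x by (simp add: gamma_times_beta_prime_density_def K_def ac_simps)
  finally show ?thesis .
qed

lemma nn_integral_gamma_ratio_indicator:
  fixes a \<beta> \<gamma> :: real
  assumes a: "0 < a" and \<beta>: "0 < \<beta>" and \<gamma>: "0 < \<gamma>" and A[measurable]: "A \<in> sets borel"
  shows "(\<integral>\<^sup>+b. \<integral>\<^sup>+c. ennreal (gamma_density \<beta> b) * ennreal (gamma_density \<gamma> c)
            * (\<integral>\<^sup>+y. ennreal (gamma_density a y) * indicator A (y * (b / c)) \<partial>lborel) \<partial>lborel \<partial>lborel)
       = (\<integral>\<^sup>+x. ennreal (gamma_times_beta_prime_density a \<beta> \<gamma> x) * indicator A x \<partial>lborel)"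
proof -
  let ?J = "gamma_ratio_joint_density a \<beta> \<gamma>"
  have change_of_variables: "ennreal (gamma_density \<beta> b) * ennreal (gamma_density \<gamma> c)
      * (\<integral>\<^sup>+y. ennreal (gamma_density a y) * indicator A (y * (b / c)) \<partial>lborel)
      = (\<integral>\<^sup>+x. ennreal (?J x b c) * indicator A x \<partial>lborel)" for b c
  proof (cases "0 < b \<and> 0 < c")
    case True
    then have b: "0 < b" and c: "0 < c" by auto
    have "(\<integral>\<^sup>+y. ennreal (gamma_density a y) * indicator A (y * (b / c)) \<partial>lborel)
        = (\<integral>\<^sup>+x. ennreal (c/b) * (ennreal (gamma_density a (c*x/b)) * indicator A x) \<partial>lborel)"
      using nn_integral_real_affine[of "\<lambda>y. ennreal (gamma_density a y) * indicator A (y * (b / c))" "c/b" 0] b c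
      by (simp add: nn_integral_cmult)
    then show ?thesis
      using b c a \<beta> \<gamma>
      by (simp add: nn_integral_cmult[symmetric] gamma_ratio_joint_density_def gamma_density_nonneg
          ennreal_mult'[symmetric] ac_simps)
  qed (auto simp: gamma_ratio_joint_density_def gamma_density_def)
  have "(\<integral>\<^sup>+b. \<integral>\<^sup>+c. \<integral>\<^sup>+x. ennreal (?J x b c) * indicator A x \<partial>lborel \<partial>lborel \<partial>lborel)
      = (\<integral>\<^sup>+x. \<integral>\<^sup>+b. \<integral>\<^sup>+c. ennreal (?J x b c) * indicator A x \<partial>lborel \<partial>lborel \<partial>lborel)"
    unfolding gamma_ratio_joint_density_def
    by (subst lborel_pair.Fubini', measurable, intro nn_integral_cong lborel_pair.Fubini', measurable)+
  also have "\<dots> = (\<integral>\<^sup>+x. (\<integral>\<^sup>+b. \<integral>\<^sup>+c. ennreal (?J x b c) \<partial>lborel \<partial>lborel) * indicator A x \<partial>lborel)"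
    unfolding gamma_ratio_joint_density_def
    by (intro nn_integral_cong, subst nn_integral_multc[symmetric], measurable,
        intro nn_integral_cong nn_integral_multc, measurable)
  also have "\<dots> = (\<integral>\<^sup>+x. ennreal (gamma_times_beta_prime_density a \<beta> \<gamma> x) * indicator A x \<partial>lborel)"
    by (simp only: nn_integral_gamma_ratio_joint_density[OF a \<beta> \<gamma>])
  finally show ?thesis
    by (simp only: change_of_variables)
qed

lemma (in prob_space) indep_var_lborel_iff:
  "indep_var lborel X lborel Y \<longleftrightarrow> indep_var borel X borel Y"
  unfolding indep_var_def indep_vars_def by (simp add: bool.case_eq_if)

lemma (in prob_space) distr_mult_indep_var:
  fixes X Y :: "'a \<Rightarrow> real"
  assumes "indep_var borel X borel Y"
  shows "distr M borel (\<lambda>w. X w * Y w)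
       = distr (distr M borel X \<Otimes>\<^sub>M distr M borel Y) borel (\<lambda>(x, y). x * y)"
proof -
  have [measurable]: "X \<in> borel_measurable M" "Y \<in> borel_measurable M"
    using assms by (auto dest: indep_var_rv1 indep_var_rv2)
  have "distr M borel (\<lambda>w. X w * Y w)
      = distr (distr M (borel \<Otimes>\<^sub>M borel) (\<lambda>w. (X w, Y w))) borel (\<lambda>(x, y). x * y)"
    by (subst distr_distr) (auto simp: comp_def)
  then show ?thesis
    using assms by (simp add: indep_var_distribution_eq)
qed

lemma (in prob_space) emeasure_distr_mult_indep_var:
  fixes Y H :: "'a \<Rightarrow> real"
  assumes Y: "distributed M lborel Y f" and indep: "indep_var borel Y borel H"
    and A[measurable]: "A \<in> sets borel"
  shows "emeasure (distr M lborel (\<lambda>w. Y w * H w)) A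
       = (\<integral>\<^sup>+w. \<integral>\<^sup>+y. f y * indicator A (y * H w) \<partial>lborel \<partial>M)"
proof -
  have [measurable]: "Y \<in> borel_measurable M" "H \<in> borel_measurable M" "f \<in> borel_measurable borel"
    using Y indep by (auto dest: distributed_measurable distributed_borel_measurable indep_var_rv2)
  interpret PY: prob_space "distr M borel Y" by (rule prob_space_distr) simp
  interpret PH: prob_space "distr M borel H" by (rule prob_space_distr) simp
  interpret P: pair_sigma_finite "distr M borel Y" "distr M borel H" ..
  have "distr M lborel (\<lambda>w. Y w * H w) = distr M borel (\<lambda>w. Y w * H w)"
    by (rule distr_cong) auto
  also have "\<dots> = distr (distr M borel Y \<Otimes>\<^sub>M distr M borel H) borel (\<lambda>(x, y). x * y)"
    by (rule distr_mult_indep_var[OF indep])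
  finally have distr_YH: "distr M lborel (\<lambda>w. Y w * H w)
      = distr (distr M borel Y \<Otimes>\<^sub>M distr M borel H) borel (\<lambda>(x, y). x * y)" .
  have PY: "distr M borel Y = density lborel f"
    using distributed_distr_eq_density[OF Y] by (simp cong: distr_cong)
  have "emeasure (distr M lborel (\<lambda>w. Y w * H w)) A
      = (\<integral>\<^sup>+x. indicator A x \<partial>distr M lborel (\<lambda>w. Y w * H w))"
    by simp
  also have "\<dots> = (\<integral>\<^sup>+p. indicator A (fst p * snd p) \<partial>(distr M borel Y \<Otimes>\<^sub>M distr M borel H))"
    unfolding distr_YH by (subst nn_integral_distr) (auto simp: case_prod_beta)
  also have "\<dots> = (\<integral>\<^sup>+h. \<integral>\<^sup>+y. indicator A (y * h) \<partial>distr M borel Y \<partial>distr M borel H)"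
    by (subst P.nn_integral_snd[symmetric]) auto
  also have "\<dots> = (\<integral>\<^sup>+h. \<integral>\<^sup>+y. f y * indicator A (y * h) \<partial>lborel \<partial>distr M borel H)"
    unfolding PY by (intro nn_integral_cong) (simp add: nn_integral_density)
  also have "\<dots> = (\<integral>\<^sup>+w. \<integral>\<^sup>+y. f y * indicator A (y * H w) \<partial>lborel \<partial>M)"
    by (subst nn_integral_distr) auto
  finally show ?thesis .
qed

lemma (in prob_space) distributed_gamma_times_beta_prime:
  fixes Y B C :: "'a \<Rightarrow> real"
  assumes a: "0 < a" and \<beta>: "0 < \<beta>" and \<gamma>: "0 < \<gamma>"
    and Y: "distributed M lborel Y (\<lambda>x. ennreal (gamma_density a x))"
    and B: "distributed M lborel B (\<lambda>x. ennreal (gamma_density \<beta> x))"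
    and C: "distributed M lborel C (\<lambda>x. ennreal (gamma_density \<gamma> x))"
    and indep_Y: "indep_var borel Y borel (\<lambda>w. B w / C w)"
    and indep_BC: "indep_var borel B borel C"
  shows "distributed M lborel (\<lambda>w. Y w * (B w / C w))
           (\<lambda>x. ennreal (gamma_times_beta_prime_density a \<beta> \<gamma> x))"
proof -
  have [measurable]: "Y \<in> borel_measurable M" "B \<in> borel_measurable M" "C \<in> borel_measurable M"
    using Y B C by (auto dest: distributed_measurable)
  have BC: "distributed M (lborel \<Otimes>\<^sub>M lborel) (\<lambda>w. (B w, C w))
      (\<lambda>(b, c). ennreal (gamma_density \<beta> b) * ennreal (gamma_density \<gamma> c))"
    using indep_BC lborel.sigma_finite_measure_axioms
    by (intro distributed_joint_indep[OF _ _ B C]) (auto simp: indep_var_lborel_iff)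
  have "emeasure (distr M lborel (\<lambda>w. Y w * (B w / C w))) A
      = (\<integral>\<^sup>+x. ennreal (gamma_times_beta_prime_density a \<beta> \<gamma> x) * indicator A x \<partial>lborel)"
    if A[measurable]: "A \<in> sets borel" for A
  proof -
    have "emeasure (distr M lborel (\<lambda>w. Y w * (B w / C w))) A
        = (\<integral>\<^sup>+q. (\<lambda>(b, c). ennreal (gamma_density \<beta> b) * ennreal (gamma_density \<gamma> c)) q
            * (\<lambda>(b, c). \<integral>\<^sup>+y. ennreal (gamma_density a y) * indicator A (y * (b / c)) \<partial>lborel) q
            \<partial>(lborel \<Otimes>\<^sub>M lborel))"
      unfolding emeasure_distr_mult_indep_var[OF Y indep_Y A]
      by (subst distributed_nn_integral[OF BC]) (auto simp: case_prod_beta)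
    also have "\<dots> = (\<integral>\<^sup>+b. \<integral>\<^sup>+c. ennreal (gamma_density \<beta> b) * ennreal (gamma_density \<gamma> c)
            * (\<integral>\<^sup>+y. ennreal (gamma_density a y) * indicator A (y * (b / c)) \<partial>lborel) \<partial>lborel \<partial>lborel)"
      by (subst lborel.nn_integral_fst[symmetric]) auto
    finally show ?thesis
      by (simp only: nn_integral_gamma_ratio_indicator[OF a \<beta> \<gamma> A])
  qed
  moreover have "(\<lambda>x. ennreal (gamma_times_beta_prime_density a \<beta> \<gamma> x)) \<in> borel_measurable borel"
    unfolding nn_integral_gamma_ratio_joint_density[OF a \<beta> \<gamma>, symmetric] gamma_ratio_joint_density_def
    by measurable
  ultimately show ?thesis
    unfolding distributed_def
    by (auto intro!: measure_eqI simp: emeasure_density)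
qed

lemma (in prob_space) indep_var_restrict_compose:
  assumes "indep_vars M' X I" "J \<inter> K = {}" "J \<subseteq> I" "K \<subseteq> I"
    and "f \<in> Pi\<^sub>M J M' \<rightarrow>\<^sub>M N" "g \<in> Pi\<^sub>M K M' \<rightarrow>\<^sub>M L"
  shows "indep_var N (\<lambda>w. f (\<lambda>i\<in>J. X i w)) L (\<lambda>w. g (\<lambda>i\<in>K. X i w))"
  using indep_var_compose[OF indep_var_restrict[OF assms(1-4)] assms(5,6)] by (simp add: comp_def)

theorem theorem10:
  fixes M :: "'w measure" and n :: nat and \<alpha> :: "nat \<Rightarrow> real" and \<beta> \<gamma> :: real
    and G :: "nat \<Rightarrow> 'w \<Rightarrow> real" and Gb Gc :: "'w \<Rightarrow> real"
  assumes "prob_space M" and "1 \<le> n"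
    and "\<forall>i<n. 0 < \<alpha> i" and "0 < \<beta>" and "0 < \<gamma>"
    and "\<forall>i<n. distributed M lborel (G i) (\<lambda>x. ennreal (gamma_density (\<alpha> i) x))"
    and "distributed M lborel Gb (\<lambda>x. ennreal (gamma_density \<beta> x))"
    and "distributed M lborel Gc (\<lambda>x. ennreal (gamma_density \<gamma> x))"
    and "prob_space.indep_vars M (\<lambda>_. borel)
           (\<lambda>i. if i < n then G i else if i = n then Gb else Gc) {0..<n+2}"
  defines "\<alpha>t \<equiv> (\<Sum>j<n. \<alpha> j)"
    and "S \<equiv> (\<lambda>w. \<Sum>i<n. G i w * (Gb w / Gc w))"
  shows "distr M borel S =
           distr (density lborel (\<lambda>g. ennreal (gamma_density \<alpha>t g)) \<Otimes>\<^sub>M distr M borel (\<lambda>w. Gb w / Gc w))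
                 borel (\<lambda>(g, h). g * h)
         \<and> distributed M lborel S
             (\<lambda>x. ennreal (if 0 < x then
                Gamma (\<alpha>t + \<gamma>) * Gamma (\<beta> + \<gamma>) / (Gamma \<alpha>t * Gamma \<beta> * Gamma \<gamma>)
                * x powr (\<alpha>t - 1) * kummerU (\<alpha>t + \<gamma>) (\<alpha>t - \<beta> + 1) x
              else 0))"
proof -
  interpret prob_space M by fact
  define X where "X = (\<lambda>i. if i < n then G i else if i = n then Gb else Gc)"
  let ?Y = "\<lambda>w. \<Sum>i<n. G i w"
  have indep_X: "indep_vars (\<lambda>_. borel) X {0..<n+2}"
    using assms(9) unfolding X_def .
  have indep_Y: "indep_var borel ?Y borel (\<lambda>w. Gb w / Gc w)"
    using indep_var_restrict_compose[OF indep_X, of "{0..<n}" "{n, Suc n}" "\<lambda>x. \<Sum>i<n. x i" _ "\<lambda>x. x n / x (Suc n)"]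
    by (simp add: X_def lessThan_atLeast0)
  have indep_BC: "indep_var borel Gb borel Gc"
    using indep_var_restrict_compose[OF indep_X, of "{n}" "{Suc n}" "\<lambda>x. x n" _ "\<lambda>x. x (Suc n)"]
    by (simp add: X_def)
  have "indep_vars (\<lambda>_. borel) X {..<n}"
    by (rule indep_vars_subset[OF indep_X]) auto
  then have "indep_vars (\<lambda>_. borel) G {..<n}"
    by (rule iffD1[OF indep_vars_cong, rotated 3]) (auto simp: X_def)
  then have Y: "distributed M lborel ?Y (\<lambda>x. ennreal (gamma_density \<alpha>t x))"
    using assms(2,3,6) unfolding \<alpha>t_def by (intro distributed_gamma_sum) (auto simp: lessThan_empty_iff)
  have "0 < \<alpha>t"
    using assms(2,3) unfolding \<alpha>t_def by (intro sum_pos) (auto simp: lessThan_empty_iff)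
  have "distr M borel ?Y = density lborel (\<lambda>x. ennreal (gamma_density \<alpha>t x))"
    using distributed_distr_eq_density[OF Y] by (simp cong: distr_cong)
  moreover have "S = (\<lambda>w. ?Y w * (Gb w / Gc w))"
    unfolding S_def by (simp only: sum_distrib_right)
  ultimately show ?thesis
    using distr_mult_indep_var[OF indep_Y] assms(4,5,7,8) \<open>0 < \<alpha>t\<close>
      distributed_gamma_times_beta_prime[OF _ _ _ Y _ _ indep_Y indep_BC]
    unfolding gamma_times_beta_prime_density_def by auto
qed

end
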